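(* Let $[X,d,m]$ be a metric random walk space with finite invariant measure $\nu$. Then $\Delta_m$ is ergodic if and only if $[X,d,m]$ (with $\nu$) is $m$-connected.
   Context: A metric random walk space $[X,d,m]$ is a Polish metric space $(X,d)$ with a family $m=(m_x)_{x\in X}$ of Borel probability measures, $x\mapsto m_x(A)$ Borel measurable, each with finite first moment. A Radon measure $\nu$ is invariant if $\nu(A)=\int_X m_x(A)d\nu(x)$ for all $\nu$-measurable $A$. Iterates $m_x^{*1}=m_x$, $m_x^{*n}(A)=\int_X m_z(A)dm_x^{*(n-1)}(z)$; $N^m_D=\{x:m_x^{*n}(D)=0\ \forall n\in\mathbb N\}$. The space is $m$-connected if $\nu(N^m_D)=0$ for every $\nu$-measurable $D$ with $0<\nu(D)<\infty$. The Laplacian is $\Delta_m f(x)=\int_X(f(y)-f(x))dm_x(y)$ with domain $L^1(X,\nu)\cap L^2(X,\nu)$; $\Delta_m$ is ergodic if every $u$ in its domain with $\Delta_m u=0$ $\nu$-a.e. is $\nu$-a.e. constant. *)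

theory Defs
  imports "HOL-Probability.Probability"
begin

definition metric_random_walk :: "('a::polish_space \<Rightarrow> 'a measure) \<Rightarrow> bool" where
  "metric_random_walk m \<longleftrightarrow>
     (\<forall>x. prob_space (m x) \<and> sets (m x) = sets borel) \<and>
     (\<forall>A \<in> sets borel. (\<lambda>x. emeasure (m x) A) \<in> borel_measurable borel) \<and>
     (\<forall>x. integrable (m x) (\<lambda>y. dist x y))"

definition radon_measure :: "'a::polish_space measure \<Rightarrow> bool" where
  "radon_measure \<nu> \<longleftrightarrow> sets \<nu> = sets borel \<and>
     (\<forall>x. \<exists>U. open U \<and> x \<in> U \<and> emeasure \<nu> U < \<infinity>) \<and>
     (\<forall>A \<in> sets \<nu>. emeasure \<nu> A = (SUP K \<in> {K. compact K \<and> K \<subseteq> A}. emeasure \<nu> K))"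

definition invariant_measure :: "('a::polish_space \<Rightarrow> 'a measure) \<Rightarrow> 'a measure \<Rightarrow> bool" where
  "invariant_measure m \<nu> \<longleftrightarrow> radon_measure \<nu> \<and>
     (\<forall>A \<in> sets \<nu>. emeasure \<nu> A = (\<integral>\<^sup>+ x. emeasure (m x) A \<partial>\<nu>))"

text \<open>Iterated measures: m_iter m n x is m_x^{*n}; m_iter m 0 x is the Dirac mass at x,
  so m_iter m 1 x = m x.\<close>
primrec m_iter :: "('a::polish_space \<Rightarrow> 'a measure) \<Rightarrow> nat \<Rightarrow> 'a \<Rightarrow> 'a measure" where
  "m_iter m 0 x = return borel x"
| "m_iter m (Suc n) x = bind (m_iter m n x) m"

definition N_set :: "('a::polish_space \<Rightarrow> 'a measure) \<Rightarrow> 'a set \<Rightarrow> 'a set" where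
  "N_set m D = {x. \<forall>n\<ge>1. emeasure (m_iter m n x) D = 0}"

definition m_connected :: "('a::polish_space \<Rightarrow> 'a measure) \<Rightarrow> 'a measure \<Rightarrow> bool" where
  "m_connected m \<nu> \<longleftrightarrow>
     (\<forall>D \<in> sets \<nu>. 0 < emeasure \<nu> D \<and> emeasure \<nu> D < \<infinity> \<longrightarrow> N_set m D \<in> null_sets \<nu>)"

definition laplacian :: "('a::polish_space \<Rightarrow> 'a measure) \<Rightarrow> ('a \<Rightarrow> real) \<Rightarrow> 'a \<Rightarrow> real" where
  "laplacian m f x = (\<integral> y. (f y - f x) \<partial>(m x))"

definition ergodic_laplacian :: "('a::polish_space \<Rightarrow> 'a measure) \<Rightarrow> 'a measure \<Rightarrow> bool" where
  "ergodic_laplacian m \<nu> \<longleftrightarrow>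
     (\<forall>u. integrable \<nu> u \<and> integrable \<nu> (\<lambda>x. (u x)\<^sup>2) \<and>
          (AE x in \<nu>. laplacian m u x = 0) \<longrightarrow> (\<exists>c. AE x in \<nu>. u x = c))"

end

theory Submission
  imports Defs
begin

text \<open>Call A invariant if m_x(A) = 1_A(x) for \<nu>-a.e. x. Both sides of the theorem are
  equivalent to every invariant set being \<nu>-null or \<nu>-conull.
  If \<Delta>_m is ergodic, apply it to the indicator of an invariant set, which is harmonic.
  Conversely, for harmonic u \<in> L^2 the identity \<integral>u(y)^2 dm_x = u(x)^2 + \<integral>(u(y) - u(x))^2 dm_x
  integrates, by invariance of \<nu>, to \<integral>\<integral>(u(y) - u(x))^2 dm_x d\<nu> = 0; so every superlevel
  set of u is invariant, hence trivial, and u equals its mean a.e.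
  If the space is m-connected and A is invariant, then outside A all iterates m_x^{*n}(A)
  vanish a.e., so almost all of the complement of A lies in the null set N_A.
  Conversely N_D is absorbing (m_x(N_D) = 1 on N_D), hence invariant because \<nu> is finite,
  and it cannot be conull when \<nu>(D) > 0 because then \<nu>(D) = \<integral>m_x(D) d\<nu> = 0.\<close>

lemma (in prob_space) emeasure_eq_of_bool_if_AE:
  assumes "A \<in> sets M" and "AE y in M. y \<in> A \<longleftrightarrow> P"
  shows "emeasure M A = of_bool P"
proof (cases P)
  case True
  then show ?thesis
    using assms by (simp add: emeasure_eq_1_AE)
next
  case False
  then have "AE y in M. y \<notin> A"
    using assms(2) by simp
  then have "A \<in> null_sets M"
    using assms(1) by (simp add: AE_iff_null_sets)
  with False show ?thesis
    by (simp add: null_sets_def)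
qed

lemma (in prob_space) nn_integral_power2_eq_variance_add:
  fixes u :: "'a \<Rightarrow> real"
  assumes [measurable]: "u \<in> borel_measurable M" and u2: "integrable M (\<lambda>y. (u y)\<^sup>2)"
  shows "(\<integral>\<^sup>+ y. ennreal ((u y - expectation u)\<^sup>2) \<partial>M) + ennreal ((expectation u)\<^sup>2)
    = (\<integral>\<^sup>+ y. ennreal ((u y)\<^sup>2) \<partial>M)"
proof -
  have u: "integrable M u"
    using square_integrable_imp_integrable[OF _ u2] by simp
  have "integrable M (\<lambda>y. (u y - expectation u)\<^sup>2)"
    using u u2 by (simp add: power2_diff)
  then have "(\<integral>\<^sup>+ y. ennreal ((u y - expectation u)\<^sup>2) \<partial>M) = ennreal (variance u)"
    by (simp add: nn_integral_eq_integral)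
  moreover have var: "variance u = expectation (\<lambda>y. (u y)\<^sup>2) - (expectation u)\<^sup>2"
    using u u2 by (rule variance_eq)
  moreover have "0 \<le> expectation (\<lambda>y. (u y)\<^sup>2) - (expectation u)\<^sup>2"
    using variance_positive[of u] unfolding var .
  ultimately show ?thesis
    using u2 by (simp add: nn_integral_eq_integral flip: ennreal_plus)
qed

lemma (in finite_measure) AE_le_mean_if_superlevel_trivial:
  fixes u :: "'a \<Rightarrow> real"
  defines "c \<equiv> (\<integral>x. u x \<partial>M) / measure M (space M)"
  assumes u: "integrable M u" and "(AE x in M. \<not> c < u x) \<or> (AE x in M. c < u x)"
  shows "AE x in M. u x \<le> c"
proof (cases "measure M (space M) = 0")
  case True
  then have "space M \<in> null_sets M"
    by (simp add: emeasure_eq_measure null_sets_def)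
  then have "AE x in M. x \<notin> space M"
    by (rule AE_not_in)
  then show ?thesis
    using AE_space by eventually_elim simp
next
  case False
  consider "AE x in M. \<not> c < u x" | "AE x in M. c < u x"
    using assms(3) by blast
  then show ?thesis
  proof cases
    case 1
    then show ?thesis
      by eventually_elim simp
  next
    case 2
    have "(\<integral>x. u x - c \<partial>M) = 0"
      using False u by (simp add: c_def)
    then have "AE x in M. u x - c = 0"
      using 2 u by (subst (asm) integral_nonneg_eq_0_iff_AE) (auto elim: eventually_mono)
    then show ?thesis
      by eventually_elim simp
  qed
qed

lemma laplacian_indicator:
  assumes "prob_space (m x)" and "A \<in> sets (m x)"
  shows "laplacian m (indicator A) x = measure (m x) A - indicator A x"
proof -
  interpret prob_space "m x"
    by fact
  show ?thesis
    unfolding laplacian_def using assms(2) by (subst Bochner_Integration.integral_diff)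
      (auto simp: prob_space less_top[symmetric])
qed

locale invariant_kernel =
  fixes m :: "'a::polish_space \<Rightarrow> 'a measure" and \<nu> :: "'a measure"
  assumes measurable_m[measurable]: "m \<in> measurable borel (subprob_algebra borel)"
    and prob_space_m: "prob_space (m x)"
    and sets_m[measurable_cong]: "sets (m x) = sets borel"
    and sets_nu[measurable_cong]: "sets \<nu> = sets borel"
    and bind_nu_m: "\<nu> \<bind> m = \<nu>"
begin

lemma space_nu[simp]: "space \<nu> = UNIV"
  using sets_eq_imp_space_eq[OF sets_nu] by simp

lemma space_m[simp]: "space (m x) = UNIV"
  using sets_eq_imp_space_eq[OF sets_m] by simp

lemma nn_integral_invariant:
  assumes [measurable]: "f \<in> borel_measurable borel"
  shows "(\<integral>\<^sup>+ x. (\<integral>\<^sup>+ y. f y \<partial>m x) \<partial>\<nu>) = (\<integral>\<^sup>+ x. f x \<partial>\<nu>)"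
  using nn_integral_bind[of f borel m \<nu>] by (simp add: bind_nu_m)

lemma emeasure_invariant:
  assumes "A \<in> sets borel"
  shows "emeasure \<nu> A = (\<integral>\<^sup>+ x. emeasure (m x) A \<partial>\<nu>)"
  using emeasure_bind[of \<nu> m borel A] assms by (simp add: bind_nu_m)

lemma AE_AE_kernel_iff:
  assumes [measurable]: "Measurable.pred borel P"
  shows "(AE x in \<nu>. AE y in m x. P y) \<longleftrightarrow> (AE x in \<nu>. P x)"
  using AE_bind[of m \<nu> borel P] unfolding bind_nu_m by simp

lemma measurable_m_iter[measurable]: "m_iter m n \<in> measurable borel (subprob_algebra borel)"
  by (induction n) (simp_all add: return_measurable)

lemma m_iter_1: "m_iter m 1 x = m x"
  using bind_return[OF measurable_m, of x] by simp

lemma m_iter_Suc_left: "m_iter m (Suc n) x = m x \<bind> m_iter m n"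
proof (induction n arbitrary: x)
  case 0
  show ?case using m_iter_1 bind_return''[OF sets_m, of x] by simp
next
  case (Suc n)
  have "m_iter m (Suc (Suc n)) x = (m x \<bind> m_iter m n) \<bind> m"
    using Suc by simp
  also have "\<dots> = m x \<bind> (\<lambda>y. m_iter m n y \<bind> m)"
    by (rule bind_assoc) measurable
  finally show ?case by simp
qed

lemma emeasure_m_iter_Suc:
  assumes "A \<in> sets borel"
  shows "emeasure (m_iter m (Suc n) x) A = (\<integral>\<^sup>+ y. emeasure (m_iter m n y) A \<partial>m x)"
  unfolding m_iter_Suc_left using assms by (intro emeasure_bind) auto

(* From here on iterates are unfolded from the left, by emeasure_m_iter_Suc. *)
declare m_iter.simps(2) [simp del]

definition invariant_set :: "'a set \<Rightarrow> bool" where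
  "invariant_set A \<longleftrightarrow> A \<in> sets borel \<and> (AE x in \<nu>. emeasure (m x) A = indicator A x)"

definition invariant_sets_trivial :: bool where
  "invariant_sets_trivial \<longleftrightarrow>
     (\<forall>A. invariant_set A \<longrightarrow> (AE x in \<nu>. x \<notin> A) \<or> (AE x in \<nu>. x \<in> A))"

lemma sets_N_set[measurable]:
  assumes [measurable]: "D \<in> sets borel"
  shows "N_set m D \<in> sets borel"
proof -
  have "N_set m D = {x \<in> space borel. \<forall>n. 1 \<le> n \<longrightarrow> emeasure (m_iter m n x) D = 0}"
    by (auto simp: N_set_def)
  also have "\<dots> \<in> sets borel"
    by measurable
  finally show ?thesis .
qed

lemma emeasure_N_set_eq_1:
  assumes [measurable]: "D \<in> sets borel" and x: "x \<in> N_set m D"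
  shows "emeasure (m x) (N_set m D) = 1"
proof -
  interpret prob_space "m x" by (rule prob_space_m)
  have "AE y in m x. emeasure (m_iter m n y) D = 0" if "n \<ge> 1" for n
  proof -
    have "(\<integral>\<^sup>+ y. emeasure (m_iter m n y) D \<partial>m x) = 0"
      using x that by (simp add: N_set_def flip: emeasure_m_iter_Suc)
    then show ?thesis
      by (simp add: nn_integral_0_iff_AE)
  qed
  then have "AE y in m x. y \<in> N_set m D"
    by (simp add: N_set_def AE_all_countable)
  then show ?thesis
    by (intro emeasure_eq_1_AE) simp_all
qed

lemma AE_m_iter_eq_0_outside_invariant_set:
  assumes A: "invariant_set A"
  shows "AE x in \<nu>. x \<notin> A \<longrightarrow> emeasure (m_iter m n x) A = 0"
proof (induction n)
  case 0
  show ?case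
    using A by (simp add: invariant_set_def)
next
  case (Suc n)
  have [measurable]: "A \<in> sets borel"
    using A by (simp add: invariant_set_def)
  have "AE x in \<nu>. AE y in m x. y \<notin> A \<longrightarrow> emeasure (m_iter m n y) A = 0"
    using Suc.IH by (subst AE_AE_kernel_iff) simp_all
  moreover have "AE x in \<nu>. x \<notin> A \<longrightarrow> (AE y in m x. y \<notin> A)"
    using A unfolding invariant_set_def
    by (auto elim!: eventually_mono intro!: AE_not_in simp: null_sets_def sets_m)
  ultimately show ?case
  proof eventually_elim
    case (elim x)
    show ?case
    proof
      assume "x \<notin> A"
      with elim have "AE y in m x. emeasure (m_iter m n y) A = 0"
        by auto
      then show "emeasure (m_iter m (Suc n) x) A = 0"
        by (simp add: emeasure_m_iter_Suc nn_integral_0_iff_AE)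
    qed
  qed
qed

lemma AE_AE_kernel_eq_if_laplacian_eq_0:
  fixes u :: "'a \<Rightarrow> real"
  assumes [measurable]: "u \<in> borel_measurable borel"
    and u2: "integrable \<nu> (\<lambda>x. (u x)\<^sup>2)" and harmonic: "AE x in \<nu>. laplacian m u x = 0"
  shows "AE x in \<nu>. AE y in m x. u y = u x"
proof -
  define Q where "Q x = (\<integral>\<^sup>+ y. ennreal ((u y)\<^sup>2) \<partial>m x)" for x
  define V where "V x = (\<integral>\<^sup>+ y. ennreal ((u y - u x)\<^sup>2) \<partial>m x)" for x
  have [measurable]: "Q \<in> borel_measurable borel" "V \<in> borel_measurable borel"
    unfolding Q_def V_def
    by (rule nn_integral_measurable_subprob_algebra2[OF _ measurable_m]; measurable)+
  have u2_finite: "(\<integral>\<^sup>+ x. ennreal ((u x)\<^sup>2) \<partial>\<nu>) \<noteq> \<infinity>"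
    using u2 by (simp add: nn_integral_eq_integral)
  have integral_Q: "(\<integral>\<^sup>+ x. Q x \<partial>\<nu>) = (\<integral>\<^sup>+ x. ennreal ((u x)\<^sup>2) \<partial>\<nu>)"
    unfolding Q_def by (rule nn_integral_invariant) measurable
  have "AE x in \<nu>. Q x \<noteq> \<infinity>"
    using integral_Q u2_finite by (intro nn_integral_PInf_AE) simp_all
  then have "AE x in \<nu>. ennreal ((u x)\<^sup>2) + V x = Q x"
    using harmonic
  proof eventually_elim
    case (elim x)
    interpret prob_space "m x"
      by (rule prob_space_m)
    have u_measurable: "u \<in> borel_measurable (m x)"
      by (simp add: measurable_cong_sets[OF sets_m refl])
    have u2_x: "integrable (m x) (\<lambda>y. (u y)\<^sup>2)"
      using elim(1) by (intro integrableI_bounded) (simp_all add: Q_def flip: less_top)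
    have "(\<integral>y. u y - u x \<partial>m x) = 0"
      using elim(2) by (simp add: laplacian_def)
    then have "expectation u = u x"
      using square_integrable_imp_integrable[OF u_measurable u2_x]
      by (simp add: prob_space[unfolded space_m])
    then show ?case
      using nn_integral_power2_eq_variance_add[OF u_measurable u2_x]
      by (simp add: V_def Q_def add.commute)
  qed
  then have "(\<integral>\<^sup>+ x. ennreal ((u x)\<^sup>2) \<partial>\<nu>) + (\<integral>\<^sup>+ x. V x \<partial>\<nu>) = (\<integral>\<^sup>+ x. Q x \<partial>\<nu>)"
    by (subst nn_integral_add[symmetric]) (simp_all cong: nn_integral_cong_AE)
  also have "\<dots> = (\<integral>\<^sup>+ x. ennreal ((u x)\<^sup>2) \<partial>\<nu>) + 0"
    by (simp add: integral_Q)
  finally have "(\<integral>\<^sup>+ x. V x \<partial>\<nu>) = 0"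
    using u2_finite ennreal_add_left_cancel by blast
  then have "AE x in \<nu>. V x = 0"
    by (simp add: nn_integral_0_iff_AE)
  then show ?thesis
    by eventually_elim (simp add: V_def nn_integral_0_iff_AE)
qed

lemma invariant_set_superlevel:
  fixes u :: "'a \<Rightarrow> real"
  assumes [measurable]: "u \<in> borel_measurable borel"
    and "AE x in \<nu>. AE y in m x. u y = u x"
  shows "invariant_set {x. c < u x}"
  unfolding invariant_set_def
proof
  show "AE x in \<nu>. emeasure (m x) {x. c < u x} = indicator {x. c < u x} x"
    using assms(2)
  proof eventually_elim
    case (elim x)
    then have "AE y in m x. y \<in> {x. c < u x} \<longleftrightarrow> c < u x"
      by eventually_elim simp
    then show ?case
      by (subst prob_space.emeasure_eq_of_bool_if_AE[OF prob_space_m]) (auto simp: indicator_def)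
  qed
qed measurable

end

locale finite_invariant_kernel = invariant_kernel + finite_measure \<nu>
begin

lemma invariant_set_if_absorbing:
  assumes [measurable]: "A \<in> sets borel"
    and absorbing: "\<And>x. x \<in> A \<Longrightarrow> emeasure (m x) A = 1"
  shows "invariant_set A"
proof -
  let ?leak = "\<lambda>x. indicator (- A) x * emeasure (m x) A"
  have "emeasure \<nu> A + (\<integral>\<^sup>+ x. ?leak x \<partial>\<nu>) = (\<integral>\<^sup>+ x. indicator A x + ?leak x \<partial>\<nu>)"
    by (simp add: nn_integral_add)
  also have "\<dots> = (\<integral>\<^sup>+ x. emeasure (m x) A \<partial>\<nu>)"
    using absorbing by (intro nn_integral_cong) (auto split: split_indicator)
  also have "\<dots> = emeasure \<nu> A + 0"
    by (simp add: emeasure_invariant)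
  finally have "(\<integral>\<^sup>+ x. ?leak x \<partial>\<nu>) = 0"
    using emeasure_finite[of A] by (subst (asm) ennreal_add_left_cancel) auto
  then have "AE x in \<nu>. ?leak x = 0"
    by (simp add: nn_integral_0_iff_AE)
  then show ?thesis
    unfolding invariant_set_def using absorbing
    by (auto elim!: eventually_mono split: split_indicator)
qed

lemma invariant_sets_trivial_if_m_connected:
  assumes "m_connected m \<nu>"
  shows invariant_sets_trivial
  unfolding invariant_sets_trivial_def
proof (intro allI impI)
  fix A assume A: "invariant_set A"
  then have [measurable]: "A \<in> sets borel"
    by (simp add: invariant_set_def)
  show "(AE x in \<nu>. x \<notin> A) \<or> (AE x in \<nu>. x \<in> A)"
  proof (cases "emeasure \<nu> A = 0")
    case True
    then have "AE x in \<nu>. x \<notin> A"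
      by (intro AE_not_in) (simp add: null_sets_def sets_nu)
    then show ?thesis ..
  next
    case False
    moreover have "A \<in> sets \<nu>" and "emeasure \<nu> A < \<infinity>"
      by (simp_all add: sets_nu less_top[symmetric])
    ultimately have "N_set m A \<in> null_sets \<nu>"
      using assms unfolding m_connected_def by (simp add: zero_less_iff_neq_zero)
    then have "AE x in \<nu>. x \<notin> N_set m A"
      by (rule AE_not_in)
    moreover have "AE x in \<nu>. \<forall>n. x \<notin> A \<longrightarrow> emeasure (m_iter m n x) A = 0"
      using AE_m_iter_eq_0_outside_invariant_set[OF A] unfolding AE_all_countable by blast
    ultimately have "AE x in \<nu>. x \<in> A"
      by eventually_elim (auto simp: N_set_def)
    then show ?thesis ..
  qed
qed

lemma m_connected_if_invariant_sets_trivial: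
  assumes invariant_sets_trivial
  shows "m_connected m \<nu>"
  unfolding m_connected_def
proof (intro ballI impI; elim conjE)
  fix D assume "D \<in> sets \<nu>" and pos: "0 < emeasure \<nu> D"
  then have [measurable]: "D \<in> sets borel"
    by (simp add: sets_nu)
  have "invariant_set (N_set m D)"
    by (rule invariant_set_if_absorbing) (simp_all add: emeasure_N_set_eq_1)
  with assms consider "AE x in \<nu>. x \<notin> N_set m D" | "AE x in \<nu>. x \<in> N_set m D"
    unfolding invariant_sets_trivial_def by blast
  then show "N_set m D \<in> null_sets \<nu>"
  proof cases
    case 1
    then show ?thesis
      by (simp add: AE_iff_null_sets)
  next
    case 2
    then have "AE x in \<nu>. emeasure (m x) D = 0"
      by eventually_elim (auto simp: N_set_def simp flip: m_iter_1)
    then have "emeasure \<nu> D = 0"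
      by (simp add: emeasure_invariant nn_integral_0_iff_AE)
    with pos show ?thesis
      by simp
  qed
qed

lemma m_connected_iff_invariant_sets_trivial: "m_connected m \<nu> \<longleftrightarrow> invariant_sets_trivial"
  using invariant_sets_trivial_if_m_connected m_connected_if_invariant_sets_trivial by blast

lemma invariant_sets_trivial_if_ergodic_laplacian:
  assumes "ergodic_laplacian m \<nu>"
  shows invariant_sets_trivial
  unfolding invariant_sets_trivial_def
proof (intro allI impI)
  fix A assume "invariant_set A"
  then have [measurable]: "A \<in> sets borel"
    and invariant: "AE x in \<nu>. emeasure (m x) A = indicator A x"
    by (simp_all add: invariant_set_def)
  have "AE x in \<nu>. laplacian m (indicator A) x = 0"
    using invariant
  proof eventually_elim
    case (elim x)
    then show ?case
      by (simp add: laplacian_indicator prob_space_m measure_def split: split_indicator)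
  qed
  moreover have "integrable \<nu> (indicator A :: 'a \<Rightarrow> real)"
    by (simp add: sets_nu less_top[symmetric])
  moreover have "(\<lambda>x. (indicator A x :: real)\<^sup>2) = indicator A"
    by (simp add: indicator_def fun_eq_iff)
  ultimately obtain c :: real where c: "AE x in \<nu>. indicator A x = c"
    using assms unfolding ergodic_laplacian_def by metis
  show "(AE x in \<nu>. x \<notin> A) \<or> (AE x in \<nu>. x \<in> A)"
  proof (cases "c = 1")
    case True
    from c have "AE x in \<nu>. x \<in> A"
      by (rule eventually_mono) (simp add: True indicator_eq_1_iff)
    then show ?thesis ..
  next
    case False
    from c have "AE x in \<nu>. x \<notin> A"
      by (rule eventually_mono) (use False in \<open>auto simp: indicator_def\<close>)
    then show ?thesis ..
  qed
qed

lemma ergodic_laplacian_if_invariant_sets_trivial: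
  assumes invariant_sets_trivial
  shows "ergodic_laplacian m \<nu>"
  unfolding ergodic_laplacian_def
proof (intro allI impI; elim conjE)
  fix u :: "'a \<Rightarrow> real"
  assume u: "integrable \<nu> u" and u2: "integrable \<nu> (\<lambda>x. (u x)\<^sup>2)"
    and harmonic: "AE x in \<nu>. laplacian m u x = 0"
  have u_measurable[measurable]: "u \<in> borel_measurable borel"
    using borel_measurable_integrable[OF u] by simp
  have trivial: "(AE x in \<nu>. \<not> c < w x) \<or> (AE x in \<nu>. c < w x)"
    if [measurable]: "w \<in> borel_measurable borel" and "AE x in \<nu>. AE y in m x. w y = w x"
    for w :: "'a \<Rightarrow> real" and c
  proof -
    have "(AE x in \<nu>. x \<notin> {x. c < w x}) \<or> (AE x in \<nu>. x \<in> {x. c < w x})"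
      using assms invariant_set_superlevel[OF that] unfolding invariant_sets_trivial_def by blast
    then show ?thesis
      by simp
  qed
  have u_harmonic: "AE x in \<nu>. AE y in m x. u y = u x"
    by (rule AE_AE_kernel_eq_if_laplacian_eq_0[OF u_measurable u2 harmonic])
  then have minus_u_harmonic: "AE x in \<nu>. AE y in m x. - u y = - u x"
    by simp
  define c where "c = (\<integral>x. u x \<partial>\<nu>) / measure \<nu> (space \<nu>)"
  have "AE x in \<nu>. u x \<le> c"
    unfolding c_def by (rule AE_le_mean_if_superlevel_trivial[OF u trivial[OF u_measurable u_harmonic]])
  moreover have "AE x in \<nu>. - u x \<le> (\<integral>x. - u x \<partial>\<nu>) / measure \<nu> (space \<nu>)"
    by (rule AE_le_mean_if_superlevel_trivial[OF integrable_minus[OF u] trivial[OF _ minus_u_harmonic]])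
      measurable
  then have "AE x in \<nu>. - u x \<le> - c"
    by (simp add: c_def)
  ultimately have "AE x in \<nu>. u x = c"
    by eventually_elim simp
  then show "\<exists>c. AE x in \<nu>. u x = c" ..
qed

lemma ergodic_laplacian_iff_invariant_sets_trivial:
  "ergodic_laplacian m \<nu> \<longleftrightarrow> invariant_sets_trivial"
  using invariant_sets_trivial_if_ergodic_laplacian ergodic_laplacian_if_invariant_sets_trivial
  by blast

end

lemma finite_invariant_kernel_if_invariant_measure:
  assumes "metric_random_walk m" and "invariant_measure m \<nu>"
    and "emeasure \<nu> (space \<nu>) < \<infinity>"
  shows "finite_invariant_kernel m \<nu>"
proof -
  have prob: "\<And>x. prob_space (m x)" and sets_m: "\<And>x. sets (m x) = sets borel"
    and emeasure_measurable: "\<And>A. A \<in> sets borel \<Longrightarrow> (\<lambda>x. emeasure (m x) A) \<in> borel_measurable borel"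
    using assms(1) unfolding metric_random_walk_def by auto
  have measurable_m: "m \<in> measurable borel (subprob_algebra borel)"
    by (rule measurable_subprob_algebra)
      (auto simp: prob sets_m emeasure_measurable prob_space_imp_subprob_space)
  have sets_nu: "sets \<nu> = sets borel"
    and invariant: "\<And>A. A \<in> sets \<nu> \<Longrightarrow> emeasure \<nu> A = (\<integral>\<^sup>+ x. emeasure (m x) A \<partial>\<nu>)"
    using assms(2) unfolding invariant_measure_def radon_measure_def by auto
  have nonempty: "space \<nu> \<noteq> {}"
    using sets_eq_imp_space_eq[OF sets_nu] by simp
  have measurable_m_nu: "m \<in> measurable \<nu> (subprob_algebra borel)"
    using measurable_m by (simp add: measurable_cong_sets[OF sets_nu refl])
  have "\<nu> \<bind> m = \<nu>"
  proof (rule measure_eqI)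
    show sets_bind_eq: "sets (\<nu> \<bind> m) = sets \<nu>"
      using nonempty by (simp add: sets_m sets_nu)
    fix A assume "A \<in> sets (\<nu> \<bind> m)"
    then have A: "A \<in> sets borel"
      by (simp add: sets_bind_eq sets_nu)
    have "emeasure (\<nu> \<bind> m) A = (\<integral>\<^sup>+ x. emeasure (m x) A \<partial>\<nu>)"
      by (rule emeasure_bind[OF nonempty measurable_m_nu A])
    also have "\<dots> = emeasure \<nu> A"
      using A by (simp add: invariant sets_nu)
    finally show "emeasure (\<nu> \<bind> m) A = emeasure \<nu> A" .
  qed
  then have "invariant_kernel m \<nu>"
    using prob sets_m measurable_m sets_nu unfolding invariant_kernel_def by blast
  moreover have "finite_measure \<nu>"
    using assms(3) by (intro finite_measureI) simp
  ultimately show ?thesis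
    by (rule finite_invariant_kernel.intro)
qed

theorem theorem2p21:
  fixes m :: "'a::polish_space \<Rightarrow> 'a measure" and \<nu> :: "'a measure"
  assumes "metric_random_walk m"
    and "invariant_measure m \<nu>"
    and "emeasure \<nu> (space \<nu>) < \<infinity>"
  shows "ergodic_laplacian m \<nu> \<longleftrightarrow> m_connected m \<nu>"
proof -
  interpret finite_invariant_kernel m \<nu>
    using assms by (rule finite_invariant_kernel_if_invariant_measure)
  show ?thesis
    by (simp add: ergodic_laplacian_iff_invariant_sets_trivial m_connected_iff_invariant_sets_trivial)
qed

end
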